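(* Let $p:[0,\infty)\to\mathbb{R}$ be concave, increasing and continuous, and suppose its right derivative at $0$, $p'(0+)$, exists and satisfies $p'(0+)>0$. Then the function $F:\mathbb{R}^n\to\mathbb{R}$, $$F(x)=p'(0+)\|x\|_1-\sum_{i=1}^n p(|x_i|),$$ is convex on $\mathbb{R}^n$. *)

theory Defs
  imports "HOL-Analysis.Analysis"
begin

end

theory Submission
  imports Defs
begin

text \<open>The function \<open>h s = p'(0+) s - p s\<close> is convex on \<open>[0,\<infinity>)\<close> with right derivative \<open>0\<close>
  at the origin, so it lies above its horizontal tangent there and is therefore nondecreasing.
  A nondecreasing convex function of the convex function \<open>\<bar>x\<^sub>i\<bar>\<close> is convex, and \<open>F\<close> is the sum
  of these over the coordinates.\<close>

text \<open>The library's \<open>convex_on_imp_above_tangent\<close> needs an interior point; here \<open>a\<close> is an endpoint.\<close>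

lemma convex_on_above_right_tangent:
  fixes f :: "real \<Rightarrow> real"
  assumes convex: "convex_on {a..} f"
    and deriv: "(f has_real_derivative D) (at a within {a..})"
    and "a \<le> y"
  shows "f a + D * (y - a) \<le> f y"
proof (cases "y = a")
  case False
  with \<open>a \<le> y\<close> have "a < y" by simp
  have "at_right a \<le> at a within {a..}"
    by (rule at_le) auto
  then have slope_lim: "((\<lambda>u. (f u - f a) / (u - a)) \<longlongrightarrow> D) (at_right a)"
    using deriv unfolding has_field_derivative_iff by (rule tendsto_mono)
  have "eventually (\<lambda>u. (f u - f a) / (u - a) \<le> (f y - f a) / (y - a)) (at_right a)"
    using eventually_at_right_real[OF \<open>a < y\<close>]
  proof eventually_elim
    case (elim u)
    have "f u \<le> (f y - f a) / (y - a) * (u - a) + f a"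
      using elim by (intro convex_onD_Icc' convex_on_subset[OF convex]) auto
    then show ?case
      using elim by (simp add: field_simps)
  qed
  then have "D \<le> (f y - f a) / (y - a)"
    by (rule tendsto_upperbound[OF slope_lim]) simp
  then show ?thesis
    using \<open>a < y\<close> by (simp add: field_simps)
qed simp

lemma mono_on_if_convex_on_right_deriv_nonneg:
  fixes f :: "real \<Rightarrow> real"
  assumes convex: "convex_on {a..} f"
    and deriv: "(f has_real_derivative D) (at a within {a..})"
    and "D \<ge> 0"
  shows "mono_on {a..} f"
proof (rule mono_onI)
  fix s t
  assume st: "s \<in> {a..}" "t \<in> {a..}" "s \<le> t"
  show "f s \<le> f t"
  proof (cases "t = a")
    case False
    with st have "a < t" by simp
    have "0 \<le> D * (t - a)"
      using \<open>D \<ge> 0\<close> \<open>a < t\<close> by simp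
    then have "f a \<le> f t"
      using convex_on_above_right_tangent[OF convex deriv, of t] st by simp
    then have slope: "0 \<le> (f t - f a) / (t - a)"
      using \<open>a < t\<close> by simp
    have "f s \<le> (f t - f a) / (t - a) * (s - a) + f a"
      using st by (intro convex_onD_Icc' convex_on_subset[OF convex]) auto
    also have "\<dots> \<le> (f t - f a) / (t - a) * (t - a) + f a"
      using slope st by (intro add_right_mono mult_left_mono) auto
    also have "\<dots> = f t"
      using \<open>a < t\<close> by simp
    finally show ?thesis .
  qed (use st in simp)
qed

lemma convex_on_compose_mono:
  fixes g :: "'a::real_vector \<Rightarrow> real"
  assumes g: "convex_on S g" and f: "convex_on T f" "mono_on T f"
    and range: "g ` S \<subseteq> T"
  shows "convex_on S (\<lambda>x. f (g x))"
proof (rule convex_onI)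
  fix t :: real and x y
  assume t: "0 < t" "t < 1" and xy: "x \<in> S" "y \<in> S"
  have "convex S" "convex T"
    using g f convex_on_imp_convex by blast+
  then have "(1 - t) *\<^sub>R x + t *\<^sub>R y \<in> S" "(1 - t) * g x + t * g y \<in> T"
    using convexD[of S x y "1 - t" t] convexD[of T "g x" "g y" "1 - t" t] t xy range
    by auto
  moreover have "g ((1 - t) *\<^sub>R x + t *\<^sub>R y) \<le> (1 - t) * g x + t * g y"
    using convex_onD[OF g] t xy by simp
  ultimately have "f (g ((1 - t) *\<^sub>R x + t *\<^sub>R y)) \<le> f ((1 - t) * g x + t * g y)"
    using range by (intro mono_onD[OF f(2)]) auto
  also have "\<dots> \<le> (1 - t) * f (g x) + t * f (g y)"
    using convex_onD[OF f(1), of t "g x" "g y"] t xy range by auto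
  finally show "f (g ((1 - t) *\<^sub>R x + t *\<^sub>R y)) \<le> (1 - t) * f (g x) + t * f (g y)" .
qed (use g convex_on_imp_convex in blast)

lemma convex_on_sum_fun:
  assumes "finite I" "convex S" "\<And>i. i \<in> I \<Longrightarrow> convex_on S (f i)"
  shows "convex_on S (\<lambda>x. \<Sum>i\<in>I. f i x)"
  using assms by (induction I rule: finite_induct) (auto simp: convex_on_const)

lemma convex_on_abs_component: "convex_on UNIV (\<lambda>x :: real ^ 'n. \<bar>x $ i\<bar>)"
proof (rule convex_onI)
  fix t :: real and x y :: "real ^ 'n"
  assume "0 < t" "t < 1"
  then show "\<bar>((1 - t) *\<^sub>R x + t *\<^sub>R y) $ i\<bar> \<le> (1 - t) * \<bar>x $ i\<bar> + t * \<bar>y $ i\<bar>"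
    by (simp add: abs_triangle_ineq[THEN order_trans] abs_mult)
qed simp

theorem proposition3p1:
  fixes p :: "real \<Rightarrow> real" and d :: real
  assumes "concave_on {0..} p"
    and "mono_on {0..} p"
    and "continuous_on {0..} p"
    and "(p has_real_derivative d) (at 0 within {0..})"
    and "d > 0"
  shows "convex_on UNIV
           (\<lambda>x :: real ^ 'n. d * (\<Sum>i\<in>UNIV. \<bar>x $ i\<bar>) - (\<Sum>i\<in>UNIV. p \<bar>x $ i\<bar>))"
proof -
  define h where "h s = d * s - p s" for s
  have h_convex: "convex_on {0..} h"
    unfolding h_def using assms(1)
    by (intro convex_on_diff convex_on_linorderI) (auto simp: algebra_simps)
  have "(h has_real_derivative d - d) (at 0 within {0..})"
    unfolding h_def using assms(4) by (auto intro!: derivative_eq_intros)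
  then have "mono_on {0..} h"
    by (intro mono_on_if_convex_on_right_deriv_nonneg[OF h_convex]) auto
  then have summand_convex: "convex_on UNIV (\<lambda>x :: real ^ 'n. h \<bar>x $ i\<bar>)" for i
    by (intro convex_on_compose_mono[OF convex_on_abs_component h_convex]) auto
  have "convex_on UNIV (\<lambda>x :: real ^ 'n. \<Sum>i\<in>UNIV. h \<bar>x $ i\<bar>)"
    by (rule convex_on_sum_fun) (auto intro: summand_convex)
  then show ?thesis
    by (simp add: h_def sum_distrib_left sum_subtractf)
qed

end
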